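(* For any $\delta\in(0,1)$ and $\epsilon\in(0,1-\delta)$ there exists a constant $c>0$ depending only on $\epsilon$ such that for all $\tau,p\in\mathbb N$, $k\in[p]$, $\phi>0$, $\sigma>0$: (1) if $(\phi^2/\sigma^2)\tau\le c\,v(k,p)$ then for every $n\ge\tau$, $$\inf_{\hat\tau\in\mathcal T(\delta)}\sup_{\theta\in\Theta(k,p,\tau,\phi)}\mathbb P_\theta(\hat\tau-\tau>n)\ge1-\delta-\epsilon;$$ (2) if $(\phi^2/\sigma^2)\tau>c\,v(k,p)$ then $$\inf_{\hat\tau\in\mathcal T(\delta)}\sup_{\theta\in\Theta(k,p,\tau,\phi)}\mathbb P_\theta\Big(\hat\tau-\tau>c\frac{\sigma^2}{\phi^2}v(k,p)\Big)\ge1-\delta-\epsilon.$$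
   Context: $\log$ natural. For a sequence $\theta=(\theta_i)_{i\in\mathbb N}$ of vectors in $\mathbb R^p$, $\mathbb P_\theta$ denotes the law of independent $Y_i\sim N_p(\theta_i,\sigma^2I)$, $i\in\mathbb N$. An extended stopping time is a random variable $\hat\tau$ with values in $\mathbb N\cup\{\infty\}$ such that $\{\hat\tau=t\}\in\sigma(Y_1,\dots,Y_t)$ for all $t$. $\Theta_0(p)$ is the set of constant sequences ($\theta_i=\mu$ for all $i$, some $\mu\in\mathbb R^p$); $\mathcal T(\delta)$ is the set of extended stopping times with $\mathbb P_\theta(\hat\tau<\infty)\le\delta$ for every $\theta\in\Theta_0(p)$. $\Theta(k,p,\tau,\phi)$ is the set of sequences for which there exist $\mu_1,\mu_2\in\mathbb R^p$ with $\theta_i=\mu_1$ for $i\le\tau$, $\theta_i=\mu_2$ for $i\ge\tau+1$, $\|\mu_1-\mu_2\|_2=\phi$ and $\|\mu_1-\mu_2\|_0\le k$ (number of nonzero entries). $v(k,p)=\sqrt p$ if $k>\sqrt p$, and $v(k,p)=k\log(ep/k^2)$ otherwise. *)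

theory Defs
  imports "HOL-Probability.Probability"
begin

text \<open>Observations are indexed by i \<in> {1..}; each observation Y_i is a vector in R^p,
  represented as a function nat \<Rightarrow> real with coordinates j \<in> {..<p}.\<close>

type_synonym obs_seq = "nat \<Rightarrow> nat \<Rightarrow> real"

definition obs_law :: "nat \<Rightarrow> real \<Rightarrow> obs_seq \<Rightarrow> obs_seq measure" where
  "obs_law p \<sigma> \<theta> =
     PiM {1..} (\<lambda>i. PiM {..<p} (\<lambda>j. density lborel (normal_density (\<theta> i j) \<sigma>)))"

definition obs_space :: "nat \<Rightarrow> obs_seq measure" where
  "obs_space p = PiM {1..} (\<lambda>i. PiM {..<p} (\<lambda>j. (borel :: real measure)))"

definition obs_sigma :: "nat \<Rightarrow> nat \<Rightarrow> obs_seq measure" where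
  "obs_sigma p t = vimage_algebra (space (obs_space p)) (\<lambda>\<omega>. restrict \<omega> {1..t})
      (PiM {1..t} (\<lambda>i. PiM {..<p} (\<lambda>j. (borel :: real measure))))"

definition ext_stopping_time :: "nat \<Rightarrow> (obs_seq \<Rightarrow> enat) \<Rightarrow> bool" where
  "ext_stopping_time p T \<longleftrightarrow>
     (\<forall>\<omega>\<in>space (obs_space p). T \<omega> \<noteq> 0) \<and>
     (\<forall>t::nat. {\<omega>\<in>space (obs_space p). T \<omega> = enat t} \<in> sets (obs_sigma p t))"

definition l2norm :: "nat \<Rightarrow> (nat \<Rightarrow> real) \<Rightarrow> real" where
  "l2norm p x = sqrt (\<Sum>j<p. (x j)\<^sup>2)"

definition l0norm :: "nat \<Rightarrow> (nat \<Rightarrow> real) \<Rightarrow> nat" where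
  "l0norm p x = card {j. j < p \<and> x j \<noteq> 0}"

definition Theta0 :: "nat \<Rightarrow> obs_seq set" where
  "Theta0 p = {\<theta>. \<exists>\<mu>. \<forall>i\<ge>1. \<theta> i = \<mu>}"

definition ThetaCP :: "nat \<Rightarrow> nat \<Rightarrow> nat \<Rightarrow> real \<Rightarrow> obs_seq set" where
  "ThetaCP k p \<tau> \<phi> = {\<theta>. \<exists>\<mu>1 \<mu>2.
      (\<forall>i. 1 \<le> i \<and> i \<le> \<tau> \<longrightarrow> \<theta> i = \<mu>1) \<and> (\<forall>i\<ge>\<tau>+1. \<theta> i = \<mu>2) \<and>
      l2norm p (\<lambda>j. \<mu>1 j - \<mu>2 j) = \<phi> \<and> l0norm p (\<lambda>j. \<mu>1 j - \<mu>2 j) \<le> k}"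

definition TT :: "nat \<Rightarrow> real \<Rightarrow> real \<Rightarrow> (obs_seq \<Rightarrow> enat) set" where
  "TT p \<sigma> \<delta> = {T. ext_stopping_time p T \<and>
      (\<forall>\<theta>\<in>Theta0 p. measure (obs_law p \<sigma> \<theta>)
           {\<omega>\<in>space (obs_law p \<sigma> \<theta>). T \<omega> < \<infinity>} \<le> \<delta>)}"

definition vkp :: "nat \<Rightarrow> nat \<Rightarrow> real" where
  "vkp k p = (if real k > sqrt (real p) then sqrt (real p)
              else real k * ln (exp 1 * real p / (real k)\<^sup>2))"

end

theory Submission
  imports Defs
begin

text \<open>Le Cam's mixture method. Split the \<open>p\<close> coordinates into \<open>k\<close> blocks of length
  \<open>m = p div k\<close> and pick, in every block, one coordinate and a sign; the resulting \<open>(2 m)\<^sup>k\<close>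
  vectors of norm \<open>\<phi>\<close> and sparsity \<open>k\<close> form a uniform prior of alternatives. If the mean shift is
  present at \<open>r\<close> of the first \<open>N\<close> times, the chi-square divergence between the prior mixture
  and the null, both restricted to \<open>Y\<^sub>1, \<dots>, Y\<^sub>N\<close>, is
  \<open>(1 + (cosh t - 1) / m)\<^sup>k - 1\<close> with \<open>t = r \<phi>\<^sup>2 / (k \<sigma>\<^sup>2)\<close>, and this is at most \<open>\<epsilon>\<^sup>2\<close> as
  long as \<open>r \<phi>\<^sup>2 / \<sigma>\<^sup>2 \<le> (\<epsilon> / 7) v(k, p)\<close>. For a stopping time \<open>T\<close> the event \<open>T \<le> N\<close> depends on
  \<open>Y\<^sub>1, \<dots>, Y\<^sub>N\<close> only, so under some alternative its probability exceeds its null probability,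
  which is at most \<open>\<delta>\<close>, by at most \<open>\<epsilon>\<close>. A shift before the change point (\<open>r = \<tau>\<close> for
  every horizon) gives the first claim; a shift after it, with horizon
  \<open>N = \<tau> + \<lfloor>c \<sigma>\<^sup>2 v(k, p) / \<phi>\<^sup>2\<rfloor>\<close> for \<open>c = \<epsilon> / 7\<close>, gives the second.\<close>

section \<open>Product densities and a chi-square bound\<close>

lemma PiM_density:
  fixes M :: "'i \<Rightarrow> 'a measure" and f :: "'i \<Rightarrow> 'a \<Rightarrow> ennreal"
  assumes I: "finite I"
    and "\<And>i. sigma_finite_measure (M i)"
    and "\<And>i. sigma_finite_measure (density (M i) (f i))"
    and [measurable]: "\<And>i. f i \<in> borel_measurable (M i)"
  shows "PiM I (\<lambda>i. density (M i) (f i)) = density (PiM I M) (\<lambda>x. \<Prod>i\<in>I. f i (x i))"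
proof -
  interpret D: product_sigma_finite "\<lambda>i. density (M i) (f i)"
    using assms(3) by (simp add: product_sigma_finite_def)
  interpret P: product_sigma_finite M
    using assms(2) by (simp add: product_sigma_finite_def)
  show ?thesis
  proof (rule D.PiM_eqI[symmetric, OF I])
    show "sets (density (PiM I M) (\<lambda>x. \<Prod>i\<in>I. f i (x i))) = sets (PiM I (\<lambda>i. density (M i) (f i)))"
      by (simp cong: sets_PiM_cong)
    fix A assume "\<And>i. i \<in> I \<Longrightarrow> A i \<in> sets (density (M i) (f i))"
    then have A[measurable]: "\<And>i. i \<in> I \<Longrightarrow> A i \<in> sets (M i)" by simp
    have "Pi\<^sub>E I A \<in> sets (PiM I M)"
      using A by (rule sets_PiM_I_finite[OF I])
    then have "emeasure (density (PiM I M) (\<lambda>x. \<Prod>i\<in>I. f i (x i))) (Pi\<^sub>E I A)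
        = (\<integral>\<^sup>+x. (\<Prod>i\<in>I. f i (x i)) * indicator (Pi\<^sub>E I A) x \<partial>PiM I M)"
      by (simp add: emeasure_density)
    also have "\<dots> = (\<integral>\<^sup>+x. (\<Prod>i\<in>I. f i (x i) * indicator (A i) (x i)) \<partial>PiM I M)"
      using I by (intro nn_integral_cong)
        (auto simp: prod.distrib indicator_def space_PiM PiE_def Pi_def extensional_def)
    also have "\<dots> = (\<Prod>i\<in>I. \<integral>\<^sup>+y. f i y * indicator (A i) y \<partial>M i)"
      by (rule P.product_nn_integral_prod[OF I]) measurable
    also have "\<dots> = (\<Prod>i\<in>I. emeasure (density (M i) (f i)) (A i))"
      using A by (intro prod.cong refl) (simp add: emeasure_density)
    finally show "emeasure (density (PiM I M) (\<lambda>x. \<Prod>i\<in>I. f i (x i))) (Pi\<^sub>E I A)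
        = (\<Prod>i\<in>I. emeasure (density (M i) (f i)) (A i))" .
  qed
qed

lemma normal_density_mult_divide:
  assumes "0 < \<sigma>"
  shows "normal_density a \<sigma> z * normal_density b \<sigma> z / normal_density 0 \<sigma> z
       = exp (a * b / \<sigma>\<^sup>2) * normal_density (a + b) \<sigma> z"
proof -
  define s where "s = sqrt (2 * pi * \<sigma>\<^sup>2)"
  have "0 < s" using assms by (simp add: s_def)
  have exponent: "-(z - a)\<^sup>2 / (2 * \<sigma>\<^sup>2) + -(z - b)\<^sup>2 / (2 * \<sigma>\<^sup>2) - -(z - 0)\<^sup>2 / (2 * \<sigma>\<^sup>2)
      = a * b / \<sigma>\<^sup>2 + -(z - (a + b))\<^sup>2 / (2 * \<sigma>\<^sup>2)"
    using assms by (simp add: field_simps power2_eq_square)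
  have "normal_density a \<sigma> z * normal_density b \<sigma> z / normal_density 0 \<sigma> z
      = (1/s) * (exp (-(z - a)\<^sup>2 / (2 * \<sigma>\<^sup>2)) * exp (-(z - b)\<^sup>2 / (2 * \<sigma>\<^sup>2))
          / exp (-(z - 0)\<^sup>2 / (2 * \<sigma>\<^sup>2)))"
    unfolding normal_density_def s_def[symmetric] using \<open>0 < s\<close> by (simp add: field_simps)
  also have "\<dots> = (1/s) * exp (a * b / \<sigma>\<^sup>2 + -(z - (a + b))\<^sup>2 / (2 * \<sigma>\<^sup>2))"
    by (simp only: exp_add[symmetric] exp_diff[symmetric] exponent)
  also have "\<dots> = exp (a * b / \<sigma>\<^sup>2) * normal_density (a + b) \<sigma> z"
    unfolding normal_density_def s_def[symmetric] by (simp only: exp_add mult_ac)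
  finally show ?thesis .
qed

lemma set_nn_integral_le_chi_square:
  fixes f g :: "'a \<Rightarrow> real" and \<epsilon> :: real
  assumes [measurable]: "f \<in> borel_measurable M" "g \<in> borel_measurable M" "B \<in> sets M"
    and f_nonneg: "\<And>x. 0 \<le> f x" and g_pos: "\<And>x. 0 < g x"
    and f_int: "(\<integral>\<^sup>+x. f x \<partial>M) = 1" and g_int: "(\<integral>\<^sup>+x. g x \<partial>M) = 1"
    and chi: "(\<integral>\<^sup>+x. (f x)\<^sup>2 / g x \<partial>M) \<le> ennreal (1 + \<epsilon>\<^sup>2)"
    and "0 < \<epsilon>"
  shows "(\<integral>\<^sup>+x\<in>B. f x \<partial>M) \<le> (\<integral>\<^sup>+x\<in>B. g x \<partial>M) + \<epsilon>"
proof -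
  have pointwise: "ennreal (2 * \<epsilon>) * (ennreal (f x) * indicator B x) + 2 * ennreal (f x)
      \<le> ennreal (2 * \<epsilon>) * (ennreal (g x) * indicator B x) + ennreal (\<epsilon>\<^sup>2) * ennreal (g x)
        + ennreal ((f x)\<^sup>2 / g x) + ennreal (g x)" for x
  proof -
    \<comment> \<open>integrating this AM-GM inequality replaces the usual Cauchy-Schwarz step\<close>
    have "0 \<le> (f x - (1 + \<epsilon> * indicator B x) * g x)\<^sup>2 / g x"
      using g_pos[of x] by simp
    then have "2 * \<epsilon> * (f x * indicator B x) + 2 * f x
        \<le> 2 * \<epsilon> * (g x * indicator B x) + \<epsilon>\<^sup>2 * g x + (f x)\<^sup>2 / g x + g x"
      using g_pos[of x] zero_le_power2[of "\<epsilon> * g x"]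
      by (cases "x \<in> B") (simp_all add: field_simps power2_eq_square)
    then show ?thesis
      using f_nonneg[of x] g_pos[of x] \<open>0 < \<epsilon>\<close> ennreal_mult'[of 2 "f x", symmetric]
      by (cases "x \<in> B") (simp_all add: ennreal_mult[symmetric] ennreal_plus[symmetric] del: ennreal_plus)
  qed
  have "ennreal (2 * \<epsilon>) * (\<integral>\<^sup>+x\<in>B. f x \<partial>M) + 2
      = (\<integral>\<^sup>+x. ennreal (2 * \<epsilon>) * (ennreal (f x) * indicator B x) + 2 * ennreal (f x) \<partial>M)"
    by (simp add: nn_integral_add nn_integral_cmult f_int)
  also have "\<dots> \<le> (\<integral>\<^sup>+x. ennreal (2 * \<epsilon>) * (ennreal (g x) * indicator B x) + ennreal (\<epsilon>\<^sup>2) * ennreal (g x)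
      + ennreal ((f x)\<^sup>2 / g x) + ennreal (g x) \<partial>M)"
    by (intro nn_integral_mono pointwise)
  also have "\<dots> = ennreal (2 * \<epsilon>) * (\<integral>\<^sup>+x\<in>B. g x \<partial>M) + ennreal (\<epsilon>\<^sup>2)
      + (\<integral>\<^sup>+x. (f x)\<^sup>2 / g x \<partial>M) + 1"
    by (simp add: nn_integral_add nn_integral_cmult g_int)
  also have "\<dots> \<le> ennreal (2 * \<epsilon>) * (\<integral>\<^sup>+x\<in>B. g x \<partial>M) + (ennreal (\<epsilon>\<^sup>2) + ennreal (1 + \<epsilon>\<^sup>2) + 1)"
    unfolding add.assoc using chi by (intro add_mono order.refl)
  also have "ennreal (\<epsilon>\<^sup>2) + ennreal (1 + \<epsilon>\<^sup>2) + 1 = ennreal (\<epsilon>\<^sup>2 + (1 + \<epsilon>\<^sup>2) + 1)"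
    by (simp only: ennreal_plus zero_le_power2 add_nonneg_nonneg zero_le_one ennreal_1)
  also have "\<dots> = ennreal (2 * \<epsilon>) * ennreal \<epsilon> + 2"
    using \<open>0 < \<epsilon>\<close> by (simp add: ennreal_mult power2_eq_square mult.assoc)
  finally have "ennreal (2 * \<epsilon>) * (\<integral>\<^sup>+x\<in>B. f x \<partial>M)
      \<le> ennreal (2 * \<epsilon>) * ((\<integral>\<^sup>+x\<in>B. g x \<partial>M) + \<epsilon>)"
    by (simp add: ennreal_add_left_cancel_le add.commute[of _ 2] distrib_left add.assoc)
  then show ?thesis
    using \<open>0 < \<epsilon>\<close> by (simp add: ennreal_mult_le_mult_iff)
qed

lemma ex_le_average_ennreal:
  fixes a :: "'g \<Rightarrow> ennreal"
  assumes "finite G" "G \<noteq> {}"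
  shows "\<exists>g\<in>G. a g \<le> ennreal (1 / card G) * (\<Sum>h\<in>G. a h)"
proof
  define g where "g = arg_min_on a G"
  show "g \<in> G"
    using assms by (simp add: g_def arg_min_if_finite)
  have "a g = ennreal (1 / card G) * (\<Sum>h\<in>G. a g)"
    using assms by (simp add: ennreal_of_nat_eq_real_of_nat mult.assoc[symmetric] ennreal_mult[symmetric])
  also have "\<dots> \<le> ennreal (1 / card G) * (\<Sum>h\<in>G. a h)"
    using assms by (intro mult_left_mono sum_mono) (simp_all add: g_def arg_min_least)
  finally show "a g \<le> ennreal (1 / card G) * (\<Sum>h\<in>G. a h)" .
qed

lemma set_nn_integral_sum_divide:
  fixes d :: "'g \<Rightarrow> 'a \<Rightarrow> real"
  assumes [measurable]: "A \<in> sets M" "\<And>g. d g \<in> borel_measurable M"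
    and "0 < n" "\<And>g x. 0 \<le> d g x"
  shows "(\<integral>\<^sup>+x\<in>A. (\<Sum>g\<in>G. d g x) / n \<partial>M) = ennreal (1 / n) * (\<Sum>g\<in>G. \<integral>\<^sup>+x\<in>A. d g x \<partial>M)"
proof -
  have "(\<integral>\<^sup>+x\<in>A. (\<Sum>g\<in>G. d g x) / n \<partial>M)
      = (\<integral>\<^sup>+x. ennreal (1 / n) * (\<Sum>g\<in>G. ennreal (d g x) * indicator A x) \<partial>M)"
    using assms(3,4)
    by (intro nn_integral_cong) (simp add: ennreal_mult[symmetric] sum_nonneg split: split_indicator)
  then show ?thesis
    by (simp add: nn_integral_cmult nn_integral_sum)
qed

lemma ex_set_nn_integral_le_mixture:
  fixes d :: "'g \<Rightarrow> 'a \<Rightarrow> real" and d0 :: "'a \<Rightarrow> real" and \<epsilon> :: real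
  assumes G: "finite G" "G \<noteq> {}" and "0 < \<epsilon>"
    and [measurable]: "B \<in> sets M" "d0 \<in> borel_measurable M" "\<And>g. d g \<in> borel_measurable M"
    and d_nonneg: "\<And>g x. 0 \<le> d g x" and d0_pos: "\<And>x. 0 < d0 x"
    and d_int: "\<And>g. g \<in> G \<Longrightarrow> (\<integral>\<^sup>+x. d g x \<partial>M) = 1" and d0_int: "(\<integral>\<^sup>+x. d0 x \<partial>M) = 1"
    and chi: "(\<Sum>g\<in>G. \<Sum>h\<in>G. \<integral>\<^sup>+x. d g x * d h x / d0 x \<partial>M) \<le> ennreal ((1 + \<epsilon>\<^sup>2) * (card G)\<^sup>2)"
  shows "\<exists>g\<in>G. (\<integral>\<^sup>+x\<in>B. d g x \<partial>M) \<le> (\<integral>\<^sup>+x\<in>B. d0 x \<partial>M) + \<epsilon>"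
proof -
  define n where "n = real (card G)"
  have "0 < n" using G by (simp add: n_def card_gt_0_iff)
  define f where "f x = (\<Sum>g\<in>G. d g x) / n" for x
  have f_nonneg: "0 \<le> f x" for x
    unfolding f_def using \<open>0 < n\<close> d_nonneg by (simp add: sum_nonneg)
  have f_integral: "(\<integral>\<^sup>+x\<in>A. f x \<partial>M) = ennreal (1 / n) * (\<Sum>g\<in>G. \<integral>\<^sup>+x\<in>A. d g x \<partial>M)"
    if "A \<in> sets M" for A
    unfolding f_def by (rule set_nn_integral_sum_divide[OF that _ \<open>0 < n\<close> d_nonneg]) measurable
  have f_int: "(\<integral>\<^sup>+x. f x \<partial>M) = 1"
    using f_integral[OF sets.top] d_int \<open>0 < n\<close>
    by (simp add: n_def ennreal_of_nat_eq_real_of_nat ennreal_mult[symmetric])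
  have "(\<integral>\<^sup>+x. (f x)\<^sup>2 / d0 x \<partial>M)
      = (\<integral>\<^sup>+x. ennreal (1 / n\<^sup>2) * (\<Sum>g\<in>G. \<Sum>h\<in>G. ennreal (d g x * d h x / d0 x)) \<partial>M)"
    using \<open>0 < n\<close> d_nonneg d0_pos
    by (intro nn_integral_cong)
      (simp add: f_def ennreal_mult[symmetric] sum_nonneg less_imp_le power2_eq_square
        sum_distrib_left sum_distrib_right sum_divide_distrib algebra_simps)
  also have "\<dots> = ennreal (1 / n\<^sup>2) * (\<Sum>g\<in>G. \<Sum>h\<in>G. \<integral>\<^sup>+x. d g x * d h x / d0 x \<partial>M)"
    by (simp add: nn_integral_cmult nn_integral_sum)
  also have "\<dots> \<le> ennreal (1 / n\<^sup>2) * ennreal ((1 + \<epsilon>\<^sup>2) * n\<^sup>2)"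
    using chi by (intro mult_left_mono) (simp_all add: n_def)
  also have "\<dots> = ennreal (1 + \<epsilon>\<^sup>2)"
    using \<open>0 < n\<close> by (simp add: ennreal_mult[symmetric] add_pos_nonneg)
  finally have "(\<integral>\<^sup>+x. (f x)\<^sup>2 / d0 x \<partial>M) \<le> ennreal (1 + \<epsilon>\<^sup>2)" .
  then have mixture_le: "(\<integral>\<^sup>+x\<in>B. f x \<partial>M) \<le> (\<integral>\<^sup>+x\<in>B. d0 x \<partial>M) + \<epsilon>"
    using f_nonneg d0_pos f_int d0_int \<open>0 < \<epsilon>\<close>
    by (intro set_nn_integral_le_chi_square) (simp_all add: f_def)
  obtain g where "g \<in> G"
    and g_le: "(\<integral>\<^sup>+x\<in>B. d g x \<partial>M) \<le> ennreal (1 / n) * (\<Sum>h\<in>G. \<integral>\<^sup>+x\<in>B. d h x \<partial>M)"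
    using ex_le_average_ennreal[OF G, of "\<lambda>g. \<integral>\<^sup>+x\<in>B. d g x \<partial>M"] unfolding n_def by blast
  note g_le
  also have "ennreal (1 / n) * (\<Sum>h\<in>G. \<integral>\<^sup>+x\<in>B. d h x \<partial>M) = (\<integral>\<^sup>+x\<in>B. f x \<partial>M)"
    by (rule f_integral[OF \<open>B \<in> sets M\<close>, symmetric])
  also note mixture_le
  finally show ?thesis
    using \<open>g \<in> G\<close> by blast
qed

section \<open>The Gaussian observation model\<close>

definition obs_component :: "nat \<Rightarrow> real \<Rightarrow> obs_seq \<Rightarrow> nat \<Rightarrow> (nat \<Rightarrow> real) measure" where
  "obs_component p \<sigma> \<theta> i = PiM {..<p} (\<lambda>j. density lborel (normal_density (\<theta> i j) \<sigma>))"

definition lborel_array :: "nat \<Rightarrow> nat set \<Rightarrow> obs_seq measure" where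
  "lborel_array p I = PiM I (\<lambda>i. PiM {..<p} (\<lambda>j. lborel))"

definition obs_density :: "nat \<Rightarrow> real \<Rightarrow> obs_seq \<Rightarrow> nat set \<Rightarrow> obs_seq \<Rightarrow> real" where
  "obs_density p \<sigma> \<theta> I y = (\<Prod>i\<in>I. \<Prod>j<p. normal_density (\<theta> i j) \<sigma> (y i j))"

lemma obs_law_eq_PiM_obs_component: "obs_law p \<sigma> \<theta> = PiM {1..} (obs_component p \<sigma> \<theta>)"
  unfolding obs_law_def obs_component_def ..

lemma space_obs_law: "space (obs_law p \<sigma> \<theta>) = space (obs_space p)"
  unfolding obs_law_def obs_space_def by (simp add: space_PiM)

lemma sets_obs_law: "sets (obs_law p \<sigma> \<theta>) = sets (obs_space p)"
  unfolding obs_law_def obs_space_def by (intro sets_PiM_cong) (auto cong: sets_PiM_cong)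

lemma sets_lborel_array: "sets (lborel_array p I) = sets (PiM I (\<lambda>i. PiM {..<p} (\<lambda>j. borel)))"
  unfolding lborel_array_def by (intro sets_PiM_cong) (auto cong: sets_PiM_cong)

lemma product_prob_space_obs_component:
  assumes "0 < \<sigma>"
  shows "product_prob_space (obs_component p \<sigma> \<theta>)"
proof -
  have "prob_space (obs_component p \<sigma> \<theta> i)" for i
  proof -
    interpret product_prob_space "\<lambda>j. density lborel (normal_density (\<theta> i j) \<sigma>)" "{..<p}"
      using assms by (simp add: product_prob_space_def product_prob_space_axioms_def
          product_sigma_finite_def prob_space_normal_density prob_space_imp_sigma_finite)
    show ?thesis unfolding obs_component_def by (rule P.prob_space_axioms)
  qed
  then show ?thesis
    by (simp add: product_prob_space_def product_prob_space_axioms_def product_sigma_finite_def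
        prob_space_imp_sigma_finite)
qed

lemma prob_space_obs_law:
  assumes "0 < \<sigma>"
  shows "prob_space (obs_law p \<sigma> \<theta>)"
proof -
  interpret product_prob_space "obs_component p \<sigma> \<theta>" "{1..}"
    using product_prob_space_obs_component[OF assms] by (simp add: product_prob_space_def)
  show ?thesis unfolding obs_law_eq_PiM_obs_component by (rule P.prob_space_axioms)
qed

lemma obs_density_pos: "0 < \<sigma> \<Longrightarrow> 0 < obs_density p \<sigma> \<theta> I y"
  unfolding obs_density_def by (intro prod_pos) (simp add: normal_density_pos)

lemma measurable_component_component:
  assumes "i \<in> I" "j \<in> J"
  shows "(\<lambda>x. x i j) \<in> measurable (PiM I (\<lambda>i. PiM J (M i))) (M i j)"
proof -
  have "(\<lambda>x. x i) \<in> measurable (PiM I (\<lambda>i. PiM J (M i))) (PiM J (M i))"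
    using assms(1) by (rule measurable_component_singleton)
  moreover have "(\<lambda>y. y j) \<in> measurable (PiM J (M i)) (M i j)"
    using assms(2) by (rule measurable_component_singleton)
  ultimately show ?thesis by (rule measurable_compose)
qed

lemma borel_measurable_obs_density[measurable]:
  "obs_density p \<sigma> \<theta> I \<in> borel_measurable (lborel_array p I)"
  unfolding obs_density_def lborel_array_def
  by (intro borel_measurable_prod measurable_compose[OF measurable_component_component]) auto

lemma PiM_obs_component_eq_density:
  assumes "finite I" "0 < \<sigma>"
  shows "PiM I (obs_component p \<sigma> \<theta>) = density (lborel_array p I) (obs_density p \<sigma> \<theta> I)"
proof -
  have sigma_finite_lborel_row: "sigma_finite_measure (PiM {..<p} (\<lambda>j. lborel :: real measure))"
  proof -
    interpret finite_product_sigma_finite "\<lambda>j. lborel :: real measure" "{..<p}"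
      by (simp add: finite_product_sigma_finite_def product_sigma_finite_def
          lborel.sigma_finite_measure_axioms finite_product_sigma_finite_axioms_def)
    show ?thesis by (rule sigma_finite_measure_axioms)
  qed
  have row: "obs_component p \<sigma> \<theta> i = density (PiM {..<p} (\<lambda>j. lborel))
      (\<lambda>y. \<Prod>j<p. ennreal (normal_density (\<theta> i j) \<sigma> (y j)))" for i
    unfolding obs_component_def using assms(2)
    by (intro PiM_density) (auto intro: prob_space_imp_sigma_finite prob_space_normal_density
        lborel.sigma_finite_measure_axioms)
  have "PiM I (obs_component p \<sigma> \<theta>) = density (lborel_array p I)
      (\<lambda>y. \<Prod>i\<in>I. \<Prod>j<p. ennreal (normal_density (\<theta> i j) \<sigma> (y i j)))"
    unfolding row lborel_array_def using assms sigma_finite_lborel_row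
    by (intro PiM_density) (auto simp: row[symmetric] intro: prob_space_imp_sigma_finite
        product_prob_space.prob_space[OF product_prob_space_obs_component])
  then show ?thesis
    by (simp add: obs_density_def prod_ennreal prod_nonneg)
qed

lemma nn_integral_obs_density:
  assumes "finite I" "0 < \<sigma>"
  shows "(\<integral>\<^sup>+y. obs_density p \<sigma> \<theta> I y \<partial>lborel_array p I) = 1"
proof -
  interpret product_prob_space "obs_component p \<sigma> \<theta>" I
    using product_prob_space_obs_component[OF assms(2)] by (simp add: product_prob_space_def)
  show ?thesis
    using P.emeasure_space_1
    by (simp add: PiM_obs_component_eq_density[OF assms] emeasure_density)
qed

lemma obs_density_mult_divide:
  assumes "finite I" "0 < \<sigma>"
  shows "obs_density p \<sigma> \<theta> I y * obs_density p \<sigma> \<theta>' I y / obs_density p \<sigma> (\<lambda>i j. 0) I y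
    = exp ((\<Sum>i\<in>I. \<Sum>j<p. \<theta> i j * \<theta>' i j) / \<sigma>\<^sup>2) * obs_density p \<sigma> (\<lambda>i j. \<theta> i j + \<theta>' i j) I y"
  unfolding obs_density_def
  by (simp add: prod.distrib[symmetric] prod_dividef[symmetric] normal_density_mult_divide[OF assms(2)]
      exp_sum sum_divide_distrib assms(1))

lemma nn_integral_obs_density_mult_divide:
  assumes "finite I" "0 < \<sigma>"
  shows "(\<integral>\<^sup>+y. obs_density p \<sigma> \<theta> I y * obs_density p \<sigma> \<theta>' I y / obs_density p \<sigma> (\<lambda>i j. 0) I y
      \<partial>lborel_array p I) = exp ((\<Sum>i\<in>I. \<Sum>j<p. \<theta> i j * \<theta>' i j) / \<sigma>\<^sup>2)"
  using obs_density_pos[OF assms(2)]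
  by (simp add: obs_density_mult_divide[OF assms] ennreal_mult less_imp_le nn_integral_cmult
      nn_integral_obs_density[OF assms])

section \<open>Stopping times\<close>

lemma stopping_time_le_eq_cylinder:
  assumes "ext_stopping_time p T"
  obtains B where "B \<in> sets (PiM {1..N} (\<lambda>i. PiM {..<p} (\<lambda>j. borel)))"
    and "{\<omega>\<in>space (obs_space p). T \<omega> \<le> enat N}
      = (\<lambda>\<omega>. restrict \<omega> {1..N}) -` B \<inter> space (obs_space p)"
proof -
  let ?\<Omega> = "space (obs_space p)"
  let ?R = "\<lambda>t. PiM {1..t} (\<lambda>i. PiM {..<p} (\<lambda>j. borel :: real measure))"
  have restrict_space: "restrict \<omega> {1..t} \<in> space (?R t)" if "\<omega> \<in> ?\<Omega>" for \<omega> t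
    using that by (auto simp: obs_space_def space_PiM)
  have "\<exists>A. A \<in> sets (?R t) \<and> {\<omega>\<in>?\<Omega>. T \<omega> = enat t} = (\<lambda>\<omega>. restrict \<omega> {1..t}) -` A \<inter> ?\<Omega>" for t
  proof -
    have "{\<omega>\<in>?\<Omega>. T \<omega> = enat t} \<in> sets (vimage_algebra ?\<Omega> (\<lambda>\<omega>. restrict \<omega> {1..t}) (?R t))"
      using assms by (simp add: ext_stopping_time_def obs_sigma_def)
    then show ?thesis
      using restrict_space by (subst (asm) sets_vimage_algebra2) auto
  qed
  then obtain A where A: "\<And>t. A t \<in> sets (?R t)"
    and T_eq: "\<And>t. {\<omega>\<in>?\<Omega>. T \<omega> = enat t} = (\<lambda>\<omega>. restrict \<omega> {1..t}) -` A t \<inter> ?\<Omega>"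
    using choice[where Q = "\<lambda>t A. A \<in> sets (?R t) \<and>
      {\<omega>\<in>?\<Omega>. T \<omega> = enat t} = (\<lambda>\<omega>. restrict \<omega> {1..t}) -` A \<inter> ?\<Omega>"] by blast
  define B where "B = (\<Union>t\<le>N. (\<lambda>x. restrict x {1..t}) -` A t \<inter> space (?R N))"
  show ?thesis
  proof
    have "(\<lambda>x. restrict x {1..t}) -` A t \<inter> space (?R N) \<in> sets (?R N)" if "t \<le> N" for t
      using measurable_restrict_subset[of "{1..t}" "{1..N}"] A that
      by (auto intro: measurable_sets)
    then show "B \<in> sets (?R N)"
      unfolding B_def by (intro sets.finite_UN) simp_all
    have "T \<omega> \<le> enat N \<longleftrightarrow> restrict \<omega> {1..N} \<in> B" if "\<omega> \<in> ?\<Omega>" for \<omega>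
    proof -
      have "T \<omega> \<le> enat N \<longleftrightarrow> (\<exists>t\<le>N. T \<omega> = enat t)"
        by (cases "T \<omega>") auto
      also have "\<dots> \<longleftrightarrow> (\<exists>t\<le>N. restrict \<omega> {1..t} \<in> A t)"
        using T_eq \<open>\<omega> \<in> ?\<Omega>\<close> by blast
      also have "\<dots> \<longleftrightarrow> restrict \<omega> {1..N} \<in> B"
        using restrict_space[OF \<open>\<omega> \<in> ?\<Omega>\<close>] by (auto simp: B_def)
      finally show ?thesis .
    qed
    then show "{\<omega>\<in>?\<Omega>. T \<omega> \<le> enat N} = (\<lambda>\<omega>. restrict \<omega> {1..N}) -` B \<inter> ?\<Omega>"
      by auto
  qed
qed

lemma sets_stopping_time_le:
  assumes "ext_stopping_time p T"
  shows "{\<omega>\<in>space (obs_space p). T \<omega> \<le> enat N} \<in> sets (obs_space p)"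
proof -
  obtain B where B: "B \<in> sets (PiM {1..N} (\<lambda>i. PiM {..<p} (\<lambda>j. borel)))"
    and T_eq: "{\<omega>\<in>space (obs_space p). T \<omega> \<le> enat N}
      = (\<lambda>\<omega>. restrict \<omega> {1..N}) -` B \<inter> space (obs_space p)"
    using stopping_time_le_eq_cylinder[OF assms] .
  show ?thesis
    unfolding T_eq unfolding obs_space_def
    using measurable_restrict_subset[of "{1..N}" "{1..}"] B by (auto intro: measurable_sets)
qed

lemma obs_law_stopping_time_le:
  assumes "ext_stopping_time p T" "0 < \<sigma>"
  obtains B where "B \<in> sets (lborel_array p {1..N})"
    and "\<And>\<theta>. emeasure (obs_law p \<sigma> \<theta>) {\<omega>\<in>space (obs_law p \<sigma> \<theta>). T \<omega> \<le> enat N}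
      = (\<integral>\<^sup>+y\<in>B. obs_density p \<sigma> \<theta> {1..N} y \<partial>lborel_array p {1..N})"
proof -
  obtain B where B: "B \<in> sets (PiM {1..N} (\<lambda>i. PiM {..<p} (\<lambda>j. borel)))"
    and T_eq: "{\<omega>\<in>space (obs_space p). T \<omega> \<le> enat N}
      = (\<lambda>\<omega>. restrict \<omega> {1..N}) -` B \<inter> space (obs_space p)"
    using stopping_time_le_eq_cylinder[OF assms(1)] .
  show ?thesis
  proof
    show B_lborel: "B \<in> sets (lborel_array p {1..N})"
      using B by (simp add: sets_lborel_array)
    fix \<theta>
    interpret product_prob_space "obs_component p \<sigma> \<theta>" "{1..}"
      using product_prob_space_obs_component[OF assms(2)] by (simp add: product_prob_space_def)
    have sets_component: "sets (obs_component p \<sigma> \<theta> i) = sets (PiM {..<p} (\<lambda>j. borel))" for i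
      unfolding obs_component_def by (intro sets_PiM_cong) auto
    have B_component: "B \<in> sets (PiM {1..N} (obs_component p \<sigma> \<theta>))"
      using B by (simp add: sets_component cong: sets_PiM_cong)
    have emb: "{\<omega>\<in>space (obs_law p \<sigma> \<theta>). T \<omega> \<le> enat N}
        = prod_emb {1..} (obs_component p \<sigma> \<theta>) {1..N} B"
      unfolding T_eq space_obs_law prod_emb_def
      by (simp add: obs_space_def space_PiM obs_component_def)
    have "emeasure (obs_law p \<sigma> \<theta>) {\<omega>\<in>space (obs_law p \<sigma> \<theta>). T \<omega> \<le> enat N}
        = emeasure (PiM {1..N} (obs_component p \<sigma> \<theta>)) B"
      unfolding emb unfolding obs_law_eq_PiM_obs_component
      using B_component by (intro emeasure_PiM_emb') auto
    also have "\<dots> = (\<integral>\<^sup>+y\<in>B. obs_density p \<sigma> \<theta> {1..N} y \<partial>lborel_array p {1..N})"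
      using B_lborel assms(2) by (simp add: PiM_obs_component_eq_density emeasure_density)
    finally show "emeasure (obs_law p \<sigma> \<theta>) {\<omega>\<in>space (obs_law p \<sigma> \<theta>). T \<omega> \<le> enat N}
      = (\<integral>\<^sup>+y\<in>B. obs_density p \<sigma> \<theta> {1..N} y \<partial>lborel_array p {1..N})" .
  qed
qed

lemma measure_null_stopping_time_le:
  assumes "T \<in> TT p \<sigma> \<delta>" "0 < \<sigma>"
  shows "measure (obs_law p \<sigma> (\<lambda>i j. 0)) {\<omega>\<in>space (obs_law p \<sigma> (\<lambda>i j. 0)). T \<omega> \<le> enat N} \<le> \<delta>"
proof -
  let ?P = "obs_law p \<sigma> (\<lambda>i j. 0)"
  interpret prob_space ?P
    using prob_space_obs_law[OF assms(2)] .
  have sets_le: "{\<omega>\<in>space ?P. T \<omega> \<le> enat n} \<in> sets ?P" for n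
    using assms(1) by (simp add: TT_def space_obs_law sets_obs_law sets_stopping_time_le)
  have "T \<omega> < \<infinity> \<longleftrightarrow> (\<exists>n. T \<omega> \<le> enat n)" for \<omega>
    by (cases "T \<omega>") auto
  then have "{\<omega>\<in>space ?P. T \<omega> < \<infinity>} = (\<Union>n. {\<omega>\<in>space ?P. T \<omega> \<le> enat n})"
    by auto
  then have "{\<omega>\<in>space ?P. T \<omega> < \<infinity>} \<in> sets ?P"
    using sets_le by auto
  then have "measure ?P {\<omega>\<in>space ?P. T \<omega> \<le> enat N} \<le> measure ?P {\<omega>\<in>space ?P. T \<omega> < \<infinity>}"
    by (rule finite_measure_mono[rotated]) (auto dest: enat_ile)
  also have "\<dots> \<le> \<delta>"
    using assms(1) unfolding TT_def Theta0_def by blast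
  finally show ?thesis .
qed

section \<open>The sparse prior\<close>

definition sparse_signs :: "nat \<Rightarrow> nat \<Rightarrow> (nat \<Rightarrow> nat \<times> real) set" where
  "sparse_signs k m = PiE {..<k} (\<lambda>_. {..<m} \<times> {-1, 1})"

text \<open>The coordinates \<open>j < k * m\<close> form \<open>k\<close> blocks of length \<open>m\<close>; in block \<open>b\<close> the vector has
  the single nonzero entry \<open>a * snd (g b)\<close>, at offset \<open>fst (g b)\<close>.\<close>

definition sparse_vector :: "nat \<Rightarrow> nat \<Rightarrow> real \<Rightarrow> (nat \<Rightarrow> nat \<times> real) \<Rightarrow> nat \<Rightarrow> real" where
  "sparse_vector k m a g j =
     (if j < k * m \<and> fst (g (j div m)) = j mod m then a * snd (g (j div m)) else 0)"

definition overlap :: "nat \<times> real \<Rightarrow> nat \<times> real \<Rightarrow> real" where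
  "overlap y z = (if fst y = fst z then snd y * snd z else 0)"

lemma finite_sparse_signs: "finite (sparse_signs k m)"
  unfolding sparse_signs_def by (intro finite_PiE) auto

lemma card_sparse_signs: "card (sparse_signs k m) = (2 * m) ^ k"
  unfolding sparse_signs_def
  by (simp add: card_PiE card_cartesian_product mult_2[symmetric] power_mult_distrib)

lemma sparse_signs_memD:
  assumes "g \<in> sparse_signs k m" "b < k"
  shows "fst (g b) < m" "snd (g b) = -1 \<or> snd (g b) = 1"
  using PiE_mem[OF assms(1)[unfolded sparse_signs_def], of b] assms(2) by auto

lemma sparse_vector_block:
  assumes "b < k" "w < m"
  shows "sparse_vector k m a g (b * m + w) = (if fst (g b) = w then a * snd (g b) else 0)"
proof -
  have "b * m + w < Suc b * m"
    using assms(2) by simp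
  also have "\<dots> \<le> k * m"
    using assms(1) by (intro mult_right_mono) auto
  finally show ?thesis
    unfolding sparse_vector_def using assms by simp
qed

lemma inner_sparse_vector:
  assumes "g \<in> sparse_signs k m" "k * m \<le> p"
  shows "(\<Sum>j<p. sparse_vector k m a g j * sparse_vector k m a h j)
       = a\<^sup>2 * (\<Sum>b<k. overlap (g b) (h b))"
proof -
  have "(\<Sum>j<p. sparse_vector k m a g j * sparse_vector k m a h j)
      = (\<Sum>j<k * m. sparse_vector k m a g j * sparse_vector k m a h j)"
    using assms(2) by (intro sum.mono_neutral_right) (auto simp: sparse_vector_def)
  also have "\<dots> = (\<Sum>b<k. \<Sum>j\<in>{b * m..<b * m + m}. sparse_vector k m a g j * sparse_vector k m a h j)"
    by (rule sum.nat_group[symmetric])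
  also have "\<dots> = (\<Sum>b<k. a\<^sup>2 * overlap (g b) (h b))"
  proof (rule sum.cong[OF refl])
    fix b assume "b \<in> {..<k}"
    then have "fst (g b) < m"
      using assms(1) by (simp add: sparse_signs_memD)
    have "(\<Sum>j\<in>{b * m..<b * m + m}. sparse_vector k m a g j * sparse_vector k m a h j)
        = (\<Sum>w<m. sparse_vector k m a g (b * m + w) * sparse_vector k m a h (b * m + w))"
      by (simp add: sum.shift_bounds_nat_ivl[of _ 0 "b * m" m, simplified] lessThan_atLeast0 add.commute)
    also have "\<dots> = (\<Sum>w<m. if w = fst (g b) then a\<^sup>2 * overlap (g b) (h b) else 0)"
      using \<open>b \<in> {..<k}\<close> by (intro sum.cong refl) (auto simp: sparse_vector_block overlap_def power2_eq_square)
    finally show "(\<Sum>j\<in>{b * m..<b * m + m}. sparse_vector k m a g j * sparse_vector k m a h j)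
        = a\<^sup>2 * overlap (g b) (h b)"
      using \<open>fst (g b) < m\<close> by simp
  qed
  finally show ?thesis
    by (simp add: sum_distrib_left)
qed

lemma sum_power2_sparse_vector:
  assumes "g \<in> sparse_signs k m" "k * m \<le> p"
  shows "(\<Sum>j<p. (sparse_vector k m a g j)\<^sup>2) = a\<^sup>2 * k"
proof -
  have "overlap (g b) (g b) = 1" if "b < k" for b
    using sparse_signs_memD(2)[OF assms(1) that] by (auto simp: overlap_def)
  then show ?thesis
    using inner_sparse_vector[OF assms, of a g] by (simp add: power2_eq_square)
qed

lemma card_support_sparse_vector_le: "card {j. j < p \<and> sparse_vector k m a g j \<noteq> 0} \<le> k"
proof -
  have "{j. j < p \<and> sparse_vector k m a g j \<noteq> 0} \<subseteq> (\<lambda>b. b * m + fst (g b)) ` {..<k}"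
  proof
    fix j assume "j \<in> {j. j < p \<and> sparse_vector k m a g j \<noteq> 0}"
    then have "j < k * m" "fst (g (j div m)) = j mod m"
      by (auto simp: sparse_vector_def split: if_splits)
    then have "j div m < k" "j = j div m * m + fst (g (j div m))"
      by (auto simp: less_mult_imp_div_less)
    then show "j \<in> (\<lambda>b. b * m + fst (g b)) ` {..<k}"
      by blast
  qed
  then have "card {j. j < p \<and> sparse_vector k m a g j \<noteq> 0} \<le> card ((\<lambda>b. b * m + fst (g b)) ` {..<k})"
    by (intro card_mono) auto
  also have "\<dots> \<le> k"
    using card_image_le[of "{..<k}"] by simp
  finally show ?thesis .
qed

lemma sum_sum_prod_PiE:
  fixes F :: "'b \<Rightarrow> 'b \<Rightarrow> 'c::comm_semiring_1"
  assumes "finite I" "finite Y"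
  shows "(\<Sum>g\<in>PiE I (\<lambda>_. Y). \<Sum>h\<in>PiE I (\<lambda>_. Y). \<Prod>i\<in>I. F (g i) (h i))
       = (\<Sum>y\<in>Y. \<Sum>z\<in>Y. F y z) ^ card I"
proof -
  have "(\<Sum>h\<in>PiE I (\<lambda>_. Y). \<Prod>i\<in>I. F (g i) (h i)) = (\<Prod>i\<in>I. \<Sum>z\<in>Y. F (g i) z)" for g
    using assms by (rule prod_sum_PiE[of I "\<lambda>_. Y" "\<lambda>i z. F (g i) z", symmetric])
  moreover have "(\<Sum>g\<in>PiE I (\<lambda>_. Y). \<Prod>i\<in>I. \<Sum>z\<in>Y. F (g i) z) = (\<Prod>i\<in>I. \<Sum>y\<in>Y. \<Sum>z\<in>Y. F y z)"
    using assms by (rule prod_sum_PiE[of I "\<lambda>_. Y" "\<lambda>i y. \<Sum>z\<in>Y. F y z", symmetric])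
  ultimately show ?thesis
    by simp
qed

lemma sum_sum_exp_overlap:
  assumes "0 < m"
  shows "(\<Sum>y\<in>{..<m} \<times> {-1, 1}. \<Sum>z\<in>{..<m} \<times> {-1, 1}. exp (t * overlap y z))
       = 2 * real m * (exp t + exp (-t) + 2 * (real m - 1))"
proof -
  have row: "(\<Sum>z\<in>{..<m} \<times> {-1, 1::real}. exp (t * overlap (u, s) z)) = exp t + exp (-t) + 2 * (real m - 1)"
    if "u < m" "s \<in> {-1, 1}" for u s
  proof -
    have "(\<Sum>z\<in>{..<m} \<times> {-1, 1::real}. exp (t * overlap (u, s) z))
        = (\<Sum>v<m. \<Sum>s'\<in>{-1, 1::real}. exp (t * overlap (u, s) (v, s')))"
      by (subst sum.cartesian_product) (simp add: case_prod_beta)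
    also have "\<dots> = (\<Sum>v<m. 2 + (if v = u then exp t + exp (-t) - 2 else 0))"
      using that(2) by (intro sum.cong refl) (auto simp: overlap_def)
    also have "\<dots> = exp t + exp (-t) + 2 * (real m - 1)"
      using that(1) by (simp add: sum.distrib algebra_simps)
    finally show ?thesis .
  qed
  have "(\<Sum>y\<in>{..<m} \<times> {-1, 1}. \<Sum>z\<in>{..<m} \<times> {-1, 1}. exp (t * overlap y z))
      = (\<Sum>y\<in>{..<m} \<times> {-1, 1::real}. exp t + exp (-t) + 2 * (real m - 1))"
    using row by (intro sum.cong) auto
  then show ?thesis
    by (simp add: card_cartesian_product)
qed

lemma sum_sum_exp_inner_sparse_vector:
  assumes "0 < m" "k * m \<le> p"
  shows "(\<Sum>g\<in>sparse_signs k m. \<Sum>h\<in>sparse_signs k m.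
            exp (c * (\<Sum>j<p. sparse_vector k m a g j * sparse_vector k m a h j)))
       = (2 * real m * (exp (c * a\<^sup>2) + exp (- (c * a\<^sup>2)) + 2 * (real m - 1))) ^ k"
proof -
  have "(\<Sum>g\<in>sparse_signs k m. \<Sum>h\<in>sparse_signs k m.
            exp (c * (\<Sum>j<p. sparse_vector k m a g j * sparse_vector k m a h j)))
      = (\<Sum>g\<in>sparse_signs k m. \<Sum>h\<in>sparse_signs k m. \<Prod>b<k. exp (c * a\<^sup>2 * overlap (g b) (h b)))"
    using assms(2)
    by (intro sum.cong refl) (simp add: inner_sparse_vector exp_sum[symmetric] sum_distrib_left mult.assoc)
  also have "\<dots> = (\<Sum>y\<in>{..<m} \<times> {-1, 1}. \<Sum>z\<in>{..<m} \<times> {-1, 1}. exp (c * a\<^sup>2 * overlap y z)) ^ k"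
    unfolding sparse_signs_def by (subst sum_sum_prod_PiE) auto
  finally show ?thesis
    using assms(1) by (simp add: sum_sum_exp_overlap)
qed

definition signal_on :: "nat set \<Rightarrow> (nat \<Rightarrow> real) \<Rightarrow> obs_seq" where
  "signal_on R v i = (if i \<in> R then v else (\<lambda>j. 0))"

lemma sum_signal_on_mult:
  fixes v w :: "nat \<Rightarrow> real"
  assumes "finite I"
  shows "(\<Sum>i\<in>I. \<Sum>j<p. signal_on R v i j * signal_on R w i j) = card (I \<inter> R) * (\<Sum>j<p. v j * w j)"
proof -
  have "(\<Sum>i\<in>I. \<Sum>j<p. signal_on R v i j * signal_on R w i j)
      = (\<Sum>i\<in>I. if i \<in> R then \<Sum>j<p. v j * w j else 0)"
    by (intro sum.cong) (auto simp: signal_on_def)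
  also have "\<dots> = (\<Sum>i\<in>I \<inter> R. \<Sum>j<p. v j * w j)"
    using assms by (rule sum.inter_restrict[symmetric])
  finally show ?thesis
    by simp
qed

section \<open>Numerical estimates\<close>

lemma exp_add_exp_minus_sub_two_le:
  fixes t :: real
  assumes "0 \<le> t"
  shows "exp t + exp (-t) - 2 \<le> t\<^sup>2 * exp t"
proof -
  define A where "A = exp (t / 2)"
  have "0 < A" "exp t = A\<^sup>2"
    by (simp_all add: A_def power2_eq_square exp_add[symmetric])
  then have sq: "exp t + exp (-t) - 2 = (A - 1 / A)\<^sup>2" and diff: "A - 1 / A = A * (1 - exp (-t))"
    by (simp_all add: exp_minus inverse_eq_divide power2_eq_square field_simps)
  have "0 \<le> 1 - exp (-t)" "1 - exp (-t) \<le> t"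
    using assms exp_ge_add_one_self[of "-t"] by simp_all
  then have "(A - 1 / A)\<^sup>2 \<le> (A * t)\<^sup>2"
    unfolding diff using \<open>0 < A\<close> by (intro power_mono mult_left_mono) auto
  then show ?thesis
    unfolding sq by (simp add: power_mult_distrib \<open>exp t = A\<^sup>2\<close> mult.commute)
qed

lemma power2_mult_exp_neg_half_le:
  fixes x :: real
  assumes "0 \<le> x"
  shows "x\<^sup>2 * exp (- x / 2) \<le> 8"
proof -
  have "1 + x / 2 + (x / 2)\<^sup>2 / 2 \<le> exp (x / 2)"
    using assms by (intro exp_lower_Taylor_quadratic) simp
  then have "x\<^sup>2 \<le> 8 * exp (x / 2)"
    using assms by (simp add: power2_eq_square field_simps)
  then have "x\<^sup>2 * exp (- x / 2) \<le> 8 * exp (x / 2) * exp (- x / 2)"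
    by (simp add: mult_right_mono)
  also have "\<dots> = 8"
    by (simp add: mult.assoc exp_add[symmetric])
  finally show ?thesis .
qed

lemma one_add_power_le:
  fixes x :: real
  assumes "0 \<le> x" "real k * x \<le> 1"
  shows "(1 + x) ^ k \<le> 1 + 2 * real k * x"
proof -
  have "(1 + x) ^ k \<le> exp x ^ k"
    using assms(1) by (intro power_mono) (auto simp: exp_ge_add_one_self add.commute)
  also have "\<dots> = exp (k * x)"
    by (simp add: exp_of_nat_mult)
  also have "\<dots> \<le> 1 + k * x + (k * x)\<^sup>2"
    using assms by (intro exp_bound) simp_all
  also have "\<dots> \<le> 1 + 2 * real k * x"
    using assms mult_left_le[of "k * x" "k * x"] by (simp add: power2_eq_square mult.commute)
  finally show ?thesis .
qed

lemma vkp_nonneg: "0 \<le> vkp k p"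
proof (cases "real k > sqrt (real p)")
  case False
  show ?thesis
  proof (cases "k = 0")
    case False
    have "(real k)\<^sup>2 \<le> (sqrt (real p))\<^sup>2"
      using \<open>\<not> real k > sqrt (real p)\<close> by (intro power_mono) auto
    also have "\<dots> \<le> exp 1 * real p"
      using exp_ge_add_one_self[of 1] mult_right_mono[of 1 "exp 1" "real p"] by simp
    finally have "1 \<le> exp 1 * real p / (real k)\<^sup>2"
      using False by simp
    with \<open>\<not> real k > sqrt (real p)\<close> show ?thesis
      by (simp add: vkp_def)
  qed (simp add: vkp_def)
qed (simp add: vkp_def)

lemma power2_mult_exp_div_le_of_sqrt_less:
  fixes w c :: real
  assumes "sqrt (real p) < real k" "0 < p" "0 \<le> c" "c \<le> 1" "0 \<le> w" "w \<le> c * sqrt p"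
  shows "w\<^sup>2 * exp (w / k) / p \<le> 3 * c\<^sup>2"
proof -
  have "0 < real k"
    using assms(1) real_sqrt_ge_zero[of "real p"] by linarith
  have "w / k \<le> c * sqrt p / k"
    using assms(6) \<open>0 < real k\<close> by (simp add: divide_right_mono)
  also have "\<dots> \<le> 1"
    using assms(1,3,4) mult_left_le_one_le[of "sqrt p" c] \<open>0 < real k\<close> by simp
  finally have "exp (w / k) \<le> 3"
    using exp_le by (meson exp_le_cancel_iff order.trans)
  moreover have "w\<^sup>2 \<le> c\<^sup>2 * p"
    using power_mono[OF assms(6,5), of 2] by (simp add: power_mult_distrib)
  ultimately have "w\<^sup>2 * exp (w / k) \<le> (c\<^sup>2 * p) * 3"
    by (intro mult_mono) auto
  then show ?thesis
    using assms(2) by (simp add: field_simps)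
qed

lemma power2_mult_exp_div_le_of_le_sqrt:
  fixes w c :: real
  assumes "0 < k" "real k \<le> sqrt (real p)" "0 \<le> c" "c \<le> 1 / 2" "0 \<le> w"
    and w_le: "w \<le> c * (real k * ln (exp 1 * real p / (real k)\<^sup>2))"
  shows "w\<^sup>2 * exp (w / k) / p \<le> 24 * c\<^sup>2"
proof -
  define L where "L = ln (exp 1 * real p / (real k)\<^sup>2)"
  have "(real k)\<^sup>2 \<le> (sqrt (real p))\<^sup>2"
    using assms(2) by (intro power_mono) auto
  then have "(real k)\<^sup>2 \<le> real p"
    by simp
  moreover have "0 < (real k)\<^sup>2"
    using assms(1) by simp
  ultimately have "0 < real p"
    by linarith
  with \<open>(real k)\<^sup>2 \<le> real p\<close> have "exp 1 \<le> exp 1 * real p / (real k)\<^sup>2"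
    using assms(1) by (simp add: field_simps)
  then have "1 \<le> L" and exp_L: "exp L = exp 1 * real p / (real k)\<^sup>2"
    using assms(1) \<open>0 < real p\<close> by (simp_all add: L_def ln_ge_iff)
  have "w / k \<le> c * L"
    using w_le assms(1) by (simp add: L_def field_simps)
  moreover have "w\<^sup>2 \<le> (c * k * L)\<^sup>2"
    using power_mono[OF w_le assms(5), of 2] by (simp add: L_def mult.assoc)
  ultimately have "w\<^sup>2 * exp (w / k) / p \<le> (c * k * L)\<^sup>2 * exp (c * L) / p"
    using \<open>0 < real p\<close> by (intro divide_right_mono mult_mono) auto
  also have "\<dots> = exp 1 * c\<^sup>2 * (L\<^sup>2 * exp (c * L - L))"
    using assms(1) \<open>0 < real p\<close> by (simp add: exp_diff exp_L field_simps power_mult_distrib)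
  also have "\<dots> \<le> 3 * c\<^sup>2 * (L\<^sup>2 * exp (- L / 2))"
    using assms(3,4) \<open>1 \<le> L\<close> exp_le by (intro mult_mono) (auto simp: field_simps)
  also have "\<dots> \<le> 3 * c\<^sup>2 * 8"
    using power2_mult_exp_neg_half_le[of L] \<open>1 \<le> L\<close> by (intro mult_left_mono) auto
  finally show ?thesis
    by simp
qed

text \<open>The factor \<open>1 / 7\<close> in the constant makes \<open>24 (\<epsilon> / 7)\<^sup>2 \<le> \<epsilon>\<^sup>2 / 2\<close>.\<close>

lemma power2_mult_exp_div_le_of_le_vkp:
  fixes w \<epsilon> :: real
  assumes k: "1 \<le> k" "k \<le> p" and w: "0 \<le> w" "w \<le> \<epsilon> / 7 * vkp k p" and "0 < \<epsilon>" "\<epsilon> < 1"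
  shows "w\<^sup>2 * exp (w / k) / p \<le> \<epsilon>\<^sup>2 / 2"
proof -
  have "w\<^sup>2 * exp (w / k) / p \<le> 24 * (\<epsilon> / 7)\<^sup>2"
  proof (cases "real k > sqrt (real p)")
    case True
    then have "w\<^sup>2 * exp (w / k) / p \<le> 3 * (\<epsilon> / 7)\<^sup>2"
      using k w \<open>0 < \<epsilon>\<close> \<open>\<epsilon> < 1\<close> by (intro power2_mult_exp_div_le_of_sqrt_less) (auto simp: vkp_def)
    then show ?thesis
      using zero_le_power2[of "\<epsilon> / 7"] by linarith
  next
    case False
    then show ?thesis
      using k w \<open>0 < \<epsilon>\<close> \<open>\<epsilon> < 1\<close> by (intro power2_mult_exp_div_le_of_le_sqrt) (auto simp: vkp_def)
  qed
  also have "\<dots> \<le> \<epsilon>\<^sup>2 / 2"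
    by (simp add: power2_eq_square)
  finally show ?thesis .
qed

lemma le_two_mult_div:
  fixes k p :: nat
  assumes "0 < k" "k \<le> p"
  shows "p \<le> 2 * k * (p div k)"
proof -
  have "0 < p div k"
    using assms by (simp add: div_greater_zero_iff)
  then have "k \<le> k * (p div k)"
    by simp
  moreover have "k * (p div k) + p mod k = p"
    by (rule mult_div_mod_eq)
  moreover have "p mod k < k"
    using assms(1) by simp
  ultimately show ?thesis
    by (simp only: mult.assoc)
qed

lemma sparse_prior_chi_square_le:
  fixes w \<epsilon> :: real
  assumes k: "1 \<le> k" "k \<le> p" and w: "0 \<le> w" "w \<le> \<epsilon> / 7 * vkp k p" and "0 < \<epsilon>" "\<epsilon> < 1"
  defines "m \<equiv> p div k"
  shows "(2 * real m * (exp (w / k) + exp (- (w / k)) + 2 * (real m - 1))) ^ k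
    \<le> (1 + \<epsilon>\<^sup>2) * (real (card (sparse_signs k m)))\<^sup>2"
proof -
  define t where "t = w / k"
  define q where "q = (exp t + exp (-t) - 2) / (2 * real m)"
  have "0 < m"
    using k by (simp add: m_def div_greater_zero_iff)
  have "p \<le> 2 * k * m"
    using le_two_mult_div[of k p] k by (simp add: m_def)
  then have "real p \<le> real (2 * k * m)"
    by (simp only: of_nat_le_iff)
  then have "real p \<le> 2 * real k * real m"
    by simp
  have "0 \<le> t"
    using w by (simp add: t_def)
  have "0 \<le> exp t + exp (-t) - 2"
    using exp_ge_add_one_self[of t] exp_ge_add_one_self[of "-t"] by linarith
  then have "0 \<le> q"
    by (simp add: q_def)
  have "real k * q \<le> real k * (t\<^sup>2 * exp t) / (2 * real m)"
    unfolding q_def times_divide_eq_right using exp_add_exp_minus_sub_two_le[OF \<open>0 \<le> t\<close>]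
    by (intro divide_right_mono mult_left_mono) auto
  also have "\<dots> \<le> real k * (t\<^sup>2 * exp t) * (real k / p)"
  proof -
    have "1 / (2 * real m) \<le> real k / p"
      using \<open>real p \<le> 2 * real k * real m\<close> \<open>0 < m\<close> k by (simp add: field_simps)
    then show ?thesis
      using mult_left_mono[of "1 / (2 * real m)" "real k / p" "real k * (t\<^sup>2 * exp t)"] by simp
  qed
  also have "\<dots> = w\<^sup>2 * exp (w / k) / p"
    using k by (simp add: t_def power2_eq_square field_simps)
  also have "\<dots> \<le> \<epsilon>\<^sup>2 / 2"
    using power2_mult_exp_div_le_of_le_vkp[OF k w \<open>0 < \<epsilon>\<close> \<open>\<epsilon> < 1\<close>] .
  finally have "real k * q \<le> \<epsilon>\<^sup>2 / 2" .
  moreover have "\<epsilon>\<^sup>2 \<le> 1"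
    using \<open>0 < \<epsilon>\<close> \<open>\<epsilon> < 1\<close> by (simp add: power_le_one)
  ultimately have power_le: "(1 + q) ^ k \<le> 1 + \<epsilon>\<^sup>2"
    using one_add_power_le[OF \<open>0 \<le> q\<close>, of k] by linarith
  have "2 * real m * (exp (w / k) + exp (- (w / k)) + 2 * (real m - 1)) = (2 * real m)\<^sup>2 * (1 + q)"
    using \<open>0 < m\<close> by (simp add: q_def t_def field_simps power2_eq_square)
  then have "(2 * real m * (exp (w / k) + exp (- (w / k)) + 2 * (real m - 1))) ^ k
      = ((2 * real m)\<^sup>2) ^ k * (1 + q) ^ k"
    by (simp only: power_mult_distrib)
  also have "\<dots> \<le> ((2 * real m)\<^sup>2) ^ k * (1 + \<epsilon>\<^sup>2)"
    using power_le by (intro mult_left_mono) auto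
  also have "((2 * real m)\<^sup>2) ^ k = (real (card (sparse_signs k m)))\<^sup>2"
    by (simp only: card_sparse_signs of_nat_power of_nat_mult of_nat_numeral power_mult[symmetric]
        mult.commute[of 2 k])
  finally show ?thesis
    by (simp only: mult.commute)
qed

section \<open>Lower bounds\<close>

lemma sparse_mixture_chi_square_le:
  assumes "0 < \<sigma>" and k: "1 \<le> k" "k \<le> p" and "0 < \<epsilon>" "\<epsilon> < 1"
    and signal: "real (card ({1..N} \<inter> R)) * \<phi>\<^sup>2 / \<sigma>\<^sup>2 \<le> \<epsilon> / 7 * vkp k p"
  defines "\<theta> \<equiv> \<lambda>g. signal_on R (sparse_vector k (p div k) (\<phi> / sqrt k) g)"
  shows "(\<Sum>g\<in>sparse_signs k (p div k). \<Sum>h\<in>sparse_signs k (p div k).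
      \<integral>\<^sup>+y. obs_density p \<sigma> (\<theta> g) {1..N} y * obs_density p \<sigma> (\<theta> h) {1..N} y
        / obs_density p \<sigma> (\<lambda>i j. 0) {1..N} y \<partial>lborel_array p {1..N})
    \<le> ennreal ((1 + \<epsilon>\<^sup>2) * (real (card (sparse_signs k (p div k))))\<^sup>2)"
proof -
  define m where "m = p div k"
  define a where "a = \<phi> / sqrt k"
  define c where "c = real (card ({1..N} \<inter> R)) / \<sigma>\<^sup>2"
  have "0 < m" "k * m \<le> p"
    using k by (simp_all add: m_def div_greater_zero_iff div_times_less_eq_dividend)
  have "(\<Sum>g\<in>sparse_signs k m. \<Sum>h\<in>sparse_signs k m.
      \<integral>\<^sup>+y. obs_density p \<sigma> (\<theta> g) {1..N} y * obs_density p \<sigma> (\<theta> h) {1..N} y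
        / obs_density p \<sigma> (\<lambda>i j. 0) {1..N} y \<partial>lborel_array p {1..N})
      = ennreal (\<Sum>g\<in>sparse_signs k m. \<Sum>h\<in>sparse_signs k m.
          exp (c * (\<Sum>j<p. sparse_vector k m a g j * sparse_vector k m a h j)))"
    using \<open>0 < \<sigma>\<close>
    by (simp add: \<theta>_def m_def a_def c_def nn_integral_obs_density_mult_divide sum_signal_on_mult sum_nonneg)
  also have "\<dots> = ennreal ((2 * real m * (exp (c * a\<^sup>2) + exp (- (c * a\<^sup>2)) + 2 * (real m - 1))) ^ k)"
    using \<open>0 < m\<close> \<open>k * m \<le> p\<close> by (simp add: sum_sum_exp_inner_sparse_vector)
  also have "c * a\<^sup>2 = (real (card ({1..N} \<inter> R)) * \<phi>\<^sup>2 / \<sigma>\<^sup>2) / k"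
    using k by (simp add: c_def a_def power_divide)
  also have "ennreal ((2 * real m * (exp (real (card ({1..N} \<inter> R)) * \<phi>\<^sup>2 / \<sigma>\<^sup>2 / k)
        + exp (- (real (card ({1..N} \<inter> R)) * \<phi>\<^sup>2 / \<sigma>\<^sup>2 / k)) + 2 * (real m - 1))) ^ k)
      \<le> ennreal ((1 + \<epsilon>\<^sup>2) * (real (card (sparse_signs k m)))\<^sup>2)"
    unfolding m_def using k signal \<open>0 < \<epsilon>\<close> \<open>\<epsilon> < 1\<close>
    by (intro ennreal_leI sparse_prior_chi_square_le) auto
  finally show ?thesis
    unfolding m_def .
qed

lemma ex_sparse_alternative_stopping_time_le:
  assumes T: "T \<in> TT p \<sigma> \<delta>" and "0 < \<sigma>" and k: "1 \<le> k" "k \<le> p" and "0 < \<epsilon>" "\<epsilon> < 1"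
    and signal: "real (card ({1..N} \<inter> R)) * \<phi>\<^sup>2 / \<sigma>\<^sup>2 \<le> \<epsilon> / 7 * vkp k p"
  shows "\<exists>g\<in>sparse_signs k (p div k).
    measure (obs_law p \<sigma> (signal_on R (sparse_vector k (p div k) (\<phi> / sqrt k) g)))
      {\<omega>\<in>space (obs_law p \<sigma> (signal_on R (sparse_vector k (p div k) (\<phi> / sqrt k) g))). T \<omega> \<le> enat N}
    \<le> \<delta> + \<epsilon>"
proof -
  define G where "G = sparse_signs k (p div k)"
  define \<theta> where "\<theta> g = signal_on R (sparse_vector k (p div k) (\<phi> / sqrt k) g)" for g
  define d where "d \<theta>' = obs_density p \<sigma> \<theta>' {1..N}" for \<theta>'
  define E where "E \<theta>' = measure (obs_law p \<sigma> \<theta>') {\<omega>\<in>space (obs_law p \<sigma> \<theta>'). T \<omega> \<le> enat N}" for \<theta>'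
  have "G \<noteq> {}"
    using k by (simp add: G_def sparse_signs_def PiE_eq_empty_iff lessThan_empty_iff div_greater_zero_iff)
  have "ext_stopping_time p T"
    using T by (simp add: TT_def)
  obtain B where B: "B \<in> sets (lborel_array p {1..N})"
    and E_eq: "\<And>\<theta>'. emeasure (obs_law p \<sigma> \<theta>') {\<omega>\<in>space (obs_law p \<sigma> \<theta>'). T \<omega> \<le> enat N}
      = (\<integral>\<^sup>+y\<in>B. d \<theta>' y \<partial>lborel_array p {1..N})"
    unfolding d_def by (rule obs_law_stopping_time_le[OF \<open>ext_stopping_time p T\<close> \<open>0 < \<sigma>\<close>]) blast
  obtain g where "g \<in> G"
    and "(\<integral>\<^sup>+y\<in>B. d (\<theta> g) y \<partial>lborel_array p {1..N}) \<le> (\<integral>\<^sup>+y\<in>B. d (\<lambda>i j. 0) y \<partial>lborel_array p {1..N}) + \<epsilon>"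
    using ex_set_nn_integral_le_mixture[of G \<epsilon> B "lborel_array p {1..N}" "d (\<lambda>i j. 0)" "\<lambda>g. d (\<theta> g)"]
      sparse_mixture_chi_square_le[OF \<open>0 < \<sigma>\<close> k \<open>0 < \<epsilon>\<close> \<open>\<epsilon> < 1\<close> signal]
      B \<open>0 < \<epsilon>\<close> \<open>0 < \<sigma>\<close> \<open>G \<noteq> {}\<close> finite_sparse_signs
    by (auto simp: G_def d_def \<theta>_def obs_density_pos less_imp_le nn_integral_obs_density)
  then have "ennreal (E (\<theta> g)) \<le> ennreal (E (\<lambda>i j. 0)) + ennreal \<epsilon>"
    using finite_measure.emeasure_eq_measure[OF prob_space.finite_measure[OF prob_space_obs_law[OF \<open>0 < \<sigma>\<close>]]] E_eq
    by (simp add: E_def)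
  then have "E (\<theta> g) \<le> E (\<lambda>i j. 0) + \<epsilon>"
    using \<open>0 < \<epsilon>\<close> by (simp add: E_def ennreal_plus[symmetric] del: ennreal_plus)
  also have "\<dots> \<le> \<delta> + \<epsilon>"
    using measure_null_stopping_time_le[OF T \<open>0 < \<sigma>\<close>] by (simp add: E_def)
  finally show ?thesis
    using \<open>g \<in> G\<close> unfolding E_def \<theta>_def G_def by blast
qed

lemma ex_sparse_alternative_stopping_time_gt:
  assumes T: "T \<in> TT p \<sigma> \<delta>" and "0 < \<sigma>" and k: "1 \<le> k" "k \<le> p" and "0 < \<epsilon>" "\<epsilon> < 1"
    and signal: "real (card ({1..N} \<inter> R)) * \<phi>\<^sup>2 / \<sigma>\<^sup>2 \<le> \<epsilon> / 7 * vkp k p"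
  shows "\<exists>g\<in>sparse_signs k (p div k).
    1 - \<delta> - \<epsilon> \<le> measure (obs_law p \<sigma> (signal_on R (sparse_vector k (p div k) (\<phi> / sqrt k) g)))
      {\<omega>\<in>space (obs_law p \<sigma> (signal_on R (sparse_vector k (p div k) (\<phi> / sqrt k) g))). enat N < T \<omega>}"
proof -
  obtain g where "g \<in> sparse_signs k (p div k)" and le: "measure (obs_law p \<sigma> (signal_on R (sparse_vector k (p div k) (\<phi> / sqrt k) g)))
      {\<omega>\<in>space (obs_law p \<sigma> (signal_on R (sparse_vector k (p div k) (\<phi> / sqrt k) g))). T \<omega> \<le> enat N}
    \<le> \<delta> + \<epsilon>"
    using ex_sparse_alternative_stopping_time_le[OF assms] by blast
  let ?P = "obs_law p \<sigma> (signal_on R (sparse_vector k (p div k) (\<phi> / sqrt k) g))"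
  interpret prob_space ?P
    using prob_space_obs_law[OF \<open>0 < \<sigma>\<close>] .
  have "{\<omega>\<in>space ?P. T \<omega> \<le> enat N} \<in> sets ?P"
    using T by (simp add: TT_def space_obs_law sets_obs_law sets_stopping_time_le)
  then have "measure ?P {\<omega>\<in>space ?P. enat N < T \<omega>} = 1 - measure ?P {\<omega>\<in>space ?P. T \<omega> \<le> enat N}"
    by (subst prob_compl[symmetric]) (auto intro!: arg_cong[where f = "measure ?P"])
  then show ?thesis
    using le by (intro bexI[OF _ \<open>g \<in> sparse_signs k (p div k)\<close>]) linarith
qed

lemma signal_on_sparse_vector_mem_ThetaCP:
  assumes "g \<in> sparse_signs k (p div k)" "1 \<le> k" "0 \<le> \<phi>"
  shows "signal_on {..\<tau>} (sparse_vector k (p div k) (\<phi> / sqrt k) g) \<in> ThetaCP k p \<tau> \<phi>"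
    and "signal_on {\<tau><..} (sparse_vector k (p div k) (\<phi> / sqrt k) g) \<in> ThetaCP k p \<tau> \<phi>"
proof -
  let ?v = "sparse_vector k (p div k) (\<phi> / sqrt k) g"
  have "k * (p div k) \<le> p"
    by (simp add: div_times_less_eq_dividend)
  then have "l2norm p ?v = \<phi>"
    using sum_power2_sparse_vector[OF assms(1)] assms(2,3) by (simp add: l2norm_def power_divide)
  moreover have "l0norm p ?v \<le> k"
    using card_support_sparse_vector_le by (simp add: l0norm_def)
  moreover have "l2norm p (\<lambda>j. - ?v j) = l2norm p ?v" "l0norm p (\<lambda>j. - ?v j) = l0norm p ?v"
    by (simp_all add: l2norm_def l0norm_def)
  ultimately show "signal_on {..\<tau>} ?v \<in> ThetaCP k p \<tau> \<phi>" "signal_on {\<tau><..} ?v \<in> ThetaCP k p \<tau> \<phi>"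
    unfolding ThetaCP_def
    by (intro CollectI exI[of _ ?v] exI[of _ "\<lambda>j. 0"] conjI allI impI; simp add: signal_on_def)+
qed

lemma INF_SUP_measure_stopping_time_gt_ge:
  assumes "0 < \<sigma>" "0 \<le> \<delta>" "1 \<le> k" "k \<le> p" "0 < \<epsilon>" "\<epsilon> < 1"
    and signal: "real (card ({1..N} \<inter> R)) * \<phi>\<^sup>2 / \<sigma>\<^sup>2 \<le> \<epsilon> / 7 * vkp k p"
    and alternatives: "\<And>g. g \<in> sparse_signs k (p div k) \<Longrightarrow>
      signal_on R (sparse_vector k (p div k) (\<phi> / sqrt k) g) \<in> ThetaCP k p \<tau> \<phi>"
  shows "1 - \<delta> - \<epsilon> \<le> (INF T\<in>TT p \<sigma> \<delta>. SUP \<theta>\<in>ThetaCP k p \<tau> \<phi>.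
    measure (obs_law p \<sigma> \<theta>) {\<omega>\<in>space (obs_law p \<sigma> \<theta>). enat N < T \<omega>})"
proof (rule cINF_greatest)
  have "(\<lambda>_. \<infinity>) \<in> TT p \<sigma> \<delta>"
    using \<open>0 \<le> \<delta>\<close> by (simp add: TT_def ext_stopping_time_def)
  then show "TT p \<sigma> \<delta> \<noteq> {}"
    by blast
  fix T assume "T \<in> TT p \<sigma> \<delta>"
  then obtain g where "g \<in> sparse_signs k (p div k)"
    and "1 - \<delta> - \<epsilon> \<le> measure (obs_law p \<sigma> (signal_on R (sparse_vector k (p div k) (\<phi> / sqrt k) g)))
      {\<omega>\<in>space (obs_law p \<sigma> (signal_on R (sparse_vector k (p div k) (\<phi> / sqrt k) g))). enat N < T \<omega>}"
    using ex_sparse_alternative_stopping_time_gt assms(1,3-7) by blast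
  moreover have "bdd_above ((\<lambda>\<theta>. measure (obs_law p \<sigma> \<theta>) {\<omega>\<in>space (obs_law p \<sigma> \<theta>). enat N < T \<omega>})
      ` ThetaCP k p \<tau> \<phi>)"
    using prob_space.prob_le_1[OF prob_space_obs_law[OF \<open>0 < \<sigma>\<close>]] by (intro bdd_aboveI) auto
  ultimately show "1 - \<delta> - \<epsilon> \<le> (SUP \<theta>\<in>ThetaCP k p \<tau> \<phi>.
      measure (obs_law p \<sigma> \<theta>) {\<omega>\<in>space (obs_law p \<sigma> \<theta>). enat N < T \<omega>})"
    using alternatives by (blast intro: cSUP_upper2)
qed

text \<open>With the shift before the change point, only \<open>\<tau>\<close> of the first \<open>\<tau> + n\<close> observations
  differ in law from the null, whatever \<open>n\<close> is.\<close>

lemma lower_bound_fixed_horizon: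
  assumes "0 < \<sigma>" "0 \<le> \<delta>" "1 \<le> k" "k \<le> p" "0 < \<phi>" "0 < \<epsilon>" "\<epsilon> < 1"
    and "(\<phi>\<^sup>2 / \<sigma>\<^sup>2) * real \<tau> \<le> \<epsilon> / 7 * vkp k p"
  shows "1 - \<delta> - \<epsilon> \<le> (INF T\<in>TT p \<sigma> \<delta>. SUP \<theta>\<in>ThetaCP k p \<tau> \<phi>.
    measure (obs_law p \<sigma> \<theta>) {\<omega>\<in>space (obs_law p \<sigma> \<theta>). T \<omega> > enat (\<tau> + n)})"
proof (rule INF_SUP_measure_stopping_time_gt_ge[where R = "{..\<tau>}"])
  have "{1..\<tau> + n} \<inter> {..\<tau>} = {1..\<tau>}"
    by auto
  then show "real (card ({1..\<tau> + n} \<inter> {..\<tau>})) * \<phi>\<^sup>2 / \<sigma>\<^sup>2 \<le> \<epsilon> / 7 * vkp k p"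
    using assms(8) by (simp add: field_simps)
qed (use assms signal_on_sparse_vector_mem_ThetaCP(1) in auto)

lemma lower_bound_detection_delay:
  assumes "0 < \<sigma>" "0 \<le> \<delta>" "1 \<le> k" "k \<le> p" "0 < \<phi>" "0 < \<epsilon>" "\<epsilon> < 1"
  shows "1 - \<delta> - \<epsilon> \<le> (INF T\<in>TT p \<sigma> \<delta>. SUP \<theta>\<in>ThetaCP k p \<tau> \<phi>.
    measure (obs_law p \<sigma> \<theta>) {\<omega>\<in>space (obs_law p \<sigma> \<theta>).
      T \<omega> = \<infinity> \<or> (\<exists>t::nat. T \<omega> = enat t \<and> real t - real \<tau> > \<epsilon> / 7 * (\<sigma>\<^sup>2 / \<phi>\<^sup>2) * vkp k p)})"
proof -
  define X where "X = \<epsilon> / 7 * (\<sigma>\<^sup>2 / \<phi>\<^sup>2) * vkp k p"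
  define M where "M = nat \<lfloor>X\<rfloor>"
  have "0 \<le> X"
    using assms vkp_nonneg[of k p] by (simp add: X_def)
  then have "real M \<le> X" "int M = \<lfloor>X\<rfloor>"
    by (simp_all add: M_def)
  have event: "(T \<omega> = \<infinity> \<or> (\<exists>t::nat. T \<omega> = enat t \<and> real t - real \<tau> > X)) \<longleftrightarrow> enat (\<tau> + M) < T \<omega>"
    for T :: "obs_seq \<Rightarrow> enat" and \<omega>
    using \<open>int M = \<lfloor>X\<rfloor>\<close> by (cases "T \<omega>") (auto simp: floor_less_iff less_floor_iff, linarith+)
  have "{1..\<tau> + M} \<inter> {\<tau><..} = {\<tau><..\<tau> + M}"
    by auto
  then have "real (card ({1..\<tau> + M} \<inter> {\<tau><..})) * \<phi>\<^sup>2 / \<sigma>\<^sup>2 \<le> \<epsilon> / 7 * vkp k p"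
    using \<open>real M \<le> X\<close> assms by (simp add: X_def field_simps)
  then have "1 - \<delta> - \<epsilon> \<le> (INF T\<in>TT p \<sigma> \<delta>. SUP \<theta>\<in>ThetaCP k p \<tau> \<phi>.
      measure (obs_law p \<sigma> \<theta>) {\<omega>\<in>space (obs_law p \<sigma> \<theta>). enat (\<tau> + M) < T \<omega>})"
    using assms signal_on_sparse_vector_mem_ThetaCP(2)
    by (intro INF_SUP_measure_stopping_time_gt_ge) auto
  then show ?thesis
    unfolding X_def[symmetric] event .
qed

theorem proposition8:
  "\<forall>\<epsilon>::real. 0 < \<epsilon> \<and> \<epsilon> < 1 \<longrightarrow> (\<exists>c::real. c > 0 \<and>
    (\<forall>\<delta>::real. 0 < \<delta> \<and> \<delta> < 1 \<and> \<epsilon> < 1 - \<delta> \<longrightarrow>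
     (\<forall>(\<tau>::nat) (p::nat) (k::nat) (\<phi>::real) (\<sigma>::real).
        1 \<le> \<tau> \<and> 1 \<le> p \<and> 1 \<le> k \<and> k \<le> p \<and> \<phi> > 0 \<and> \<sigma> > 0 \<longrightarrow>
        ((\<phi>\<^sup>2 / \<sigma>\<^sup>2) * real \<tau> \<le> c * vkp k p \<longrightarrow>
           (\<forall>n::nat. n \<ge> \<tau> \<longrightarrow>
              (INF T\<in>TT p \<sigma> \<delta>. SUP \<theta>\<in>ThetaCP k p \<tau> \<phi>.
                 measure (obs_law p \<sigma> \<theta>)
                   {\<omega>\<in>space (obs_law p \<sigma> \<theta>). T \<omega> > enat (\<tau> + n)})
              \<ge> 1 - \<delta> - \<epsilon>)) \<and>
        ((\<phi>\<^sup>2 / \<sigma>\<^sup>2) * real \<tau> > c * vkp k p \<longrightarrow>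
           (INF T\<in>TT p \<sigma> \<delta>. SUP \<theta>\<in>ThetaCP k p \<tau> \<phi>.
              measure (obs_law p \<sigma> \<theta>)
                {\<omega>\<in>space (obs_law p \<sigma> \<theta>).
                   (T \<omega> = \<infinity> \<or> (\<exists>t::nat. T \<omega> = enat t \<and>
                      real t - real \<tau> > c * (\<sigma>\<^sup>2 / \<phi>\<^sup>2) * vkp k p))})
           \<ge> 1 - \<delta> - \<epsilon>))))"
proof (intro allI impI, goal_cases)
  case (1 \<epsilon>)
  then show ?case
    by (intro exI[of _ "\<epsilon> / 7"] conjI allI impI lower_bound_fixed_horizon lower_bound_detection_delay)
      auto
qed

end
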